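(* Let $Q$ be a Moufang loop. Then $xa^{-3}\cdot a^3y=T_a^{-1}(T_a(x)T_a(y))$ for all $a,x,y\in Q$, where $T_a=R_a^{-1}L_a$.
   Context: A loop is a magma with identity in which the left translations $L_a(y)=ay$ and right translations $R_a(y)=ya$ are bijections; it is Moufang if it satisfies $xy\cdot zx=(x\cdot yz)x$ (Moufang loops are power associative, so $a^{\pm3}$ are defined). *)

theory Defs
  imports Main
begin

definition loop :: "('a \<Rightarrow> 'a \<Rightarrow> 'a) \<Rightarrow> 'a \<Rightarrow> bool" where
  "loop m e \<longleftrightarrow> (\<forall>x. m e x = x \<and> m x e = x) \<and>
     (\<forall>a. bij (\<lambda>y. m a y)) \<and> (\<forall>a. bij (\<lambda>y. m y a))"

definition moufang_loop :: "('a \<Rightarrow> 'a \<Rightarrow> 'a) \<Rightarrow> 'a \<Rightarrow> bool" where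
  "moufang_loop m e \<longleftrightarrow> loop m e \<and>
     (\<forall>x y z. m (m x y) (m z x) = m (m x (m y z)) x)"

definition Lt :: "('a \<Rightarrow> 'a \<Rightarrow> 'a) \<Rightarrow> 'a \<Rightarrow> 'a \<Rightarrow> 'a" where
  "Lt m a = (\<lambda>y. m a y)"

definition Rt :: "('a \<Rightarrow> 'a \<Rightarrow> 'a) \<Rightarrow> 'a \<Rightarrow> 'a \<Rightarrow> 'a" where
  "Rt m a = (\<lambda>y. m y a)"

text \<open>Inverse of a (in a Moufang loop left and right inverses coincide).\<close>
definition linv :: "('a \<Rightarrow> 'a \<Rightarrow> 'a) \<Rightarrow> 'a \<Rightarrow> 'a \<Rightarrow> 'a" where
  "linv m e a = (THE b. m a b = e)"

text \<open>a^3 (well defined by power associativity) and a^{-3} = (a^{-1})^3.\<close>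
definition cube :: "('a \<Rightarrow> 'a \<Rightarrow> 'a) \<Rightarrow> 'a \<Rightarrow> 'a" where
  "cube m a = m a (m a a)"

definition neg_cube :: "('a \<Rightarrow> 'a \<Rightarrow> 'a) \<Rightarrow> 'a \<Rightarrow> 'a \<Rightarrow> 'a" where
  "neg_cube m e a = cube m (linv m e a)"

definition Tmap :: "('a \<Rightarrow> 'a \<Rightarrow> 'a) \<Rightarrow> 'a \<Rightarrow> 'a \<Rightarrow> 'a" where
  "Tmap m a = inv (Rt m a) \<circ> Lt m a"

end

theory Submission
  imports Defs
begin

text \<open>Since \<open>R\<^sub>a\<^sup>-\<^sup>1 = R\<^bsub>a\<^sup>-\<^sup>1\<^esub>\<close>, \<open>T\<^sub>a x = a x \<cdot> a\<^sup>-\<^sup>1\<close> and \<open>T\<^sub>a\<^sup>-\<^sup>1 z = a\<^sup>-\<^sup>1 \<cdot> z a\<close>.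
  The identity therefore says \<open>(T\<^sub>a x \<cdot> T\<^sub>a y) a = a (x a\<^sup>-\<^sup>3 \<cdot> a\<^sup>3 y)\<close>. Writing
  \<open>T\<^sub>a x = a (x a\<^sup>-\<^sup>1)\<close> and \<open>T\<^sub>a y = (a y \<cdot> a\<^sup>-\<^sup>2) a\<close>, the middle Moufang identity followed by
  the left and right Moufang identities (with \<open>a\<close> and \<open>a\<^sup>2\<close>) moves all the factors of \<open>a\<close>
  to the outside and into the middle, where they collect to \<open>a\<^sup>-\<^sup>3\<close> and \<open>a\<^sup>3\<close>.\<close>

locale moufang =
  fixes mult :: "'a \<Rightarrow> 'a \<Rightarrow> 'a" (infixl "\<cdot>" 70) and one :: 'a and inverse :: "'a \<Rightarrow> 'a"
  assumes left_one: "one \<cdot> x = x"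
    and right_one: "x \<cdot> one = x"
    and left_cancel: "a \<cdot> y = a \<cdot> z \<Longrightarrow> y = z"
    and right_cancel: "y \<cdot> a = z \<cdot> a \<Longrightarrow> y = z"
    and right_inverse: "x \<cdot> inverse x = one"
    and moufang_identity: "(x \<cdot> y) \<cdot> (z \<cdot> x) = (x \<cdot> (y \<cdot> z)) \<cdot> x"
begin

lemma mult_inverse_left_cancel: "x \<cdot> (inverse x \<cdot> z) = z"
proof -
  have "z \<cdot> x = (x \<cdot> (inverse x \<cdot> z)) \<cdot> x"
    using moufang_identity[of x "inverse x" z] by (simp only: right_inverse left_one)
  then show ?thesis by (rule right_cancel[symmetric])
qed

lemma left_inverse: "inverse x \<cdot> x = one"
  by (rule left_cancel[of x]) (simp only: mult_inverse_left_cancel right_one)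

lemma inverse_mult_left_cancel: "inverse x \<cdot> (x \<cdot> z) = z"
  by (rule left_cancel[of x]) (simp only: mult_inverse_left_cancel)

lemma flexible: "x \<cdot> (z \<cdot> x) = (x \<cdot> z) \<cdot> x"
  using moufang_identity[of x one z] by (simp only: left_one right_one)

lemma mult_right_inverse_cancel: "(z \<cdot> x) \<cdot> inverse x = z"
  by (metis mult_inverse_left_cancel moufang_identity right_one)

lemma mult_inverse_right_cancel: "(z \<cdot> inverse x) \<cdot> x = z"
  by (rule right_cancel[of _ "inverse x"]) (simp only: mult_right_inverse_cancel)

lemma inverse_inverse: "inverse (inverse x) = x"
  by (rule left_cancel[of "inverse x"]) (simp only: right_inverse left_inverse)

lemma inverse_mult: "inverse (x \<cdot> y) = inverse y \<cdot> inverse x"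
proof -
  have "inverse (x \<cdot> y) \<cdot> x = inverse (x \<cdot> y) \<cdot> ((x \<cdot> y) \<cdot> inverse y)"
    by (simp only: mult_right_inverse_cancel)
  also have "\<dots> = inverse y"
    by (rule inverse_mult_left_cancel)
  finally show ?thesis
    by (metis mult_right_inverse_cancel)
qed

lemma right_moufang: "((s \<cdot> b) \<cdot> t) \<cdot> b = s \<cdot> (b \<cdot> (t \<cdot> b))"
  by (metis flexible inverse_mult_left_cancel moufang_identity mult_right_inverse_cancel)

lemma left_moufang: "b \<cdot> (t \<cdot> (b \<cdot> s)) = ((b \<cdot> t) \<cdot> b) \<cdot> s"
proof -
  have "inverse (b \<cdot> (t \<cdot> (b \<cdot> s))) = inverse (((b \<cdot> t) \<cdot> b) \<cdot> s)"
    by (simp only: inverse_mult right_moufang)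
  then show ?thesis
    by (metis inverse_inverse)
qed

lemma right_alternative: "(z \<cdot> x) \<cdot> x = z \<cdot> (x \<cdot> x)"
  using right_moufang[of z x one] by (simp only: right_one left_one)

lemma left_alternative: "x \<cdot> (x \<cdot> z) = (x \<cdot> x) \<cdot> z"
  using left_moufang[of x one z] by (simp only: right_one left_one)

lemma left_mult_cube: "a \<cdot> (a \<cdot> (a \<cdot> y)) = (a \<cdot> (a \<cdot> a)) \<cdot> y"
  by (simp only: left_moufang flexible)

lemma conjugate_assoc: "(a \<cdot> x) \<cdot> inverse a = a \<cdot> (x \<cdot> inverse a)"
proof -
  have "(a \<cdot> (x \<cdot> inverse a)) \<cdot> a = (a \<cdot> x) \<cdot> (inverse a \<cdot> a)"
    by (simp only: moufang_identity)
  also have "\<dots> = a \<cdot> x"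
    by (simp only: left_inverse right_one)
  finally show ?thesis
    by (metis mult_right_inverse_cancel)
qed

lemma conjugate_mult_conjugate:
  "(((a \<cdot> x) \<cdot> inverse a) \<cdot> ((a \<cdot> y) \<cdot> inverse a)) \<cdot> a
     = a \<cdot> ((x \<cdot> (inverse a \<cdot> (inverse a \<cdot> inverse a))) \<cdot> ((a \<cdot> (a \<cdot> a)) \<cdot> y))"
proof -
  define b where "b = a \<cdot> a"
  define u where "u = x \<cdot> inverse a"
  define w where "w = a \<cdot> y"
  have inverse_b: "inverse b = inverse a \<cdot> inverse a"
    unfolding b_def by (rule inverse_mult)
  have "(a \<cdot> y) \<cdot> inverse a = (((a \<cdot> y) \<cdot> inverse a) \<cdot> inverse a) \<cdot> a"
    by (simp only: mult_inverse_right_cancel)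
  also have "\<dots> = (w \<cdot> inverse b) \<cdot> a"
    unfolding w_def inverse_b by (simp only: right_alternative)
  finally have Ty: "(a \<cdot> y) \<cdot> inverse a = (w \<cdot> inverse b) \<cdot> a" .
  have Tx: "(a \<cdot> x) \<cdot> inverse a = a \<cdot> u"
    unfolding u_def by (rule conjugate_assoc)
  have "(((a \<cdot> x) \<cdot> inverse a) \<cdot> ((a \<cdot> y) \<cdot> inverse a)) \<cdot> a
      = ((a \<cdot> u) \<cdot> ((w \<cdot> inverse b) \<cdot> a)) \<cdot> a"
    unfolding Tx Ty ..
  also have "\<dots> = ((a \<cdot> (u \<cdot> (w \<cdot> inverse b))) \<cdot> a) \<cdot> a"
    by (simp only: moufang_identity)
  also have "\<dots> = a \<cdot> ((u \<cdot> (w \<cdot> inverse b)) \<cdot> b)"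
    unfolding b_def by (rule left_moufang[symmetric])
  also have "(u \<cdot> (w \<cdot> inverse b)) \<cdot> b = (u \<cdot> inverse b) \<cdot> (b \<cdot> w)"
    using right_moufang[of "u \<cdot> inverse b" b "w \<cdot> inverse b"]
    by (simp only: mult_inverse_right_cancel)
  also have "u \<cdot> inverse b = ((x \<cdot> inverse a) \<cdot> inverse a) \<cdot> inverse a"
    unfolding u_def inverse_b by (rule right_alternative[symmetric])
  also have "\<dots> = x \<cdot> (inverse a \<cdot> (inverse a \<cdot> inverse a))"
    by (rule right_moufang)
  also have "b \<cdot> w = a \<cdot> (a \<cdot> (a \<cdot> y))"
    unfolding b_def w_def by (rule left_alternative[symmetric])
  also have "\<dots> = (a \<cdot> (a \<cdot> a)) \<cdot> y"
    by (rule left_mult_cube)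
  finally show ?thesis .
qed

lemma Tmap_eq: "Tmap (\<cdot>) a x = (a \<cdot> x) \<cdot> inverse a"
proof -
  have "inv (Rt (\<cdot>) a) = Rt (\<cdot>) (inverse a)"
    by (rule inv_equality) (simp_all add: Rt_def mult_right_inverse_cancel mult_inverse_right_cancel)
  then show ?thesis
    by (simp add: Tmap_def Lt_def Rt_def)
qed

lemma inv_Tmap_eq: "inv (Tmap (\<cdot>) a) z = inverse a \<cdot> (z \<cdot> a)"
proof -
  have "inv (Tmap (\<cdot>) a) = (\<lambda>z. inverse a \<cdot> (z \<cdot> a))"
    by (rule inv_equality)
      (simp_all add: Tmap_eq mult_inverse_right_cancel inverse_mult_left_cancel
        mult_right_inverse_cancel mult_inverse_left_cancel)
  then show ?thesis by simp
qed

end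

lemma moufang_loop_imp_moufang:
  assumes "moufang_loop m e"
  shows "moufang m e (linv m e)"
proof -
  have loop: "loop m e" and moufang_identity: "\<And>x y z. m (m x y) (m z x) = m (m x (m y z)) x"
    using assms unfolding moufang_loop_def by auto
  have left_one: "m e x = x" and right_one: "m x e = x" for x
    using loop unfolding loop_def by auto
  have left_cancel: "m a y = m a z \<Longrightarrow> y = z" for a y z
    using loop unfolding loop_def bij_def inj_def by blast
  have right_cancel: "m y a = m z a \<Longrightarrow> y = z" for a y z
    using loop unfolding loop_def bij_def inj_def by blast
  have right_inverse: "m x (linv m e x) = e" for x
  proof -
    obtain b where b: "m x b = e"
      using loop unfolding loop_def bij_def surj_def by metis
    have "linv m e x = b"
      unfolding linv_def by (rule the_equality) (use b left_cancel in auto)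
    with b show ?thesis by simp
  qed
  show ?thesis
    using left_one right_one left_cancel right_cancel right_inverse moufang_identity
    by (rule moufang.intro)
qed

theorem proposition1p9:
  fixes m :: "'a \<Rightarrow> 'a \<Rightarrow> 'a" and e :: 'a
  assumes "moufang_loop m e"
  shows "\<forall>a x y. m (m x (neg_cube m e a)) (m (cube m a) y)
           = inv (Tmap m a) (m (Tmap m a x) (Tmap m a y))"
proof (intro allI)
  fix a x y
  interpret moufang m e "linv m e"
    using assms by (rule moufang_loop_imp_moufang)
  have "inv (Tmap m a) (m (Tmap m a x) (Tmap m a y))
      = m (linv m e a) (m (m (Tmap m a x) (Tmap m a y)) a)"
    by (rule inv_Tmap_eq)
  also have "\<dots> = m (m x (neg_cube m e a)) (m (cube m a) y)"
    unfolding Tmap_eq conjugate_mult_conjugate neg_cube_def cube_def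
    by (rule inverse_mult_left_cancel)
  finally show "m (m x (neg_cube m e a)) (m (cube m a) y)
      = inv (Tmap m a) (m (Tmap m a x) (Tmap m a y))" ..
qed

end
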